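(* Let $(\mathcal M,g_{ab})$ be a 4-dimensional Lorentzian manifold with a Killing vector $\vec\zeta$, and suppose that on an open set the Ernst one-form admits a potential $\sigma'$ ($\sigma_a=\nabla_a\sigma'$) with $\sigma'\neq0$. Then, on that set, $$\mathcal S_{abc}=\gamma_{a[b}\mathcal S(\sigma')_{c]mrd}\zeta^m\mathcal F^{rd}+4\zeta^m\zeta^r\mathcal S(\sigma')_{mar[c}\sigma_{b]},$$ i.e. the space-time Simon tensor is obtained by replacing $\mathcal C_{abcd}$ by $\mathcal S(\sigma')_{abcd}$ in its definition (in particular this expression is independent of the choice of $\sigma'$).
   Context: $(\mathcal M,g_{ab})$ is a 4-dimensional Lorentzian manifold (signature $(-,+,+,+)$) with volume form $\eta_{abcd}$ and Weyl tensor $C_{abcd}$. For a Killing vector $\vec\zeta$: $\lambda=\zeta_a\zeta^a$, $F_{ab}=\nabla_a\zeta_b$, $F^*_{ab}=\tfrac12\eta_{abcd}F^{cd}$, $\mathcal F_{ab}=F_{ab}+iF^*_{ab}$, $\mathcal F\cdot\mathcal F=\mathcal F_{ab}\mathcal F^{ab}$; $C^*_{abcd}=\tfrac12\eta_{cdpq}C_{ab}{}^{pq}$, $\mathcal C_{abcd}=C_{abcd}+iC^*_{abcd}$; Ernst one-form $\sigma_a=2\mathcal F_{ab}\zeta^b$; $\gamma_{ab}=\zeta_a\zeta_b-\lambda g_{ab}$; $\mathcal I_{abcd}=\tfrac14(i\eta_{abcd}+g_{ac}g_{bd}-g_{ad}g_{bc})$; $\mathcal Q_{abcd}=6(\mathcal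 F_{ab}\mathcal F_{cd}-\tfrac13\mathcal I_{abcd}\,\mathcal F\cdot\mathcal F)$; Mars–Simon tensor $\mathcal S(\sigma')_{abcd}=\mathcal C_{abcd}+\frac1{\sigma'}\mathcal Q_{abcd}$; space-time Simon tensor $\mathcal S_{abc}=\gamma_{a[b}\mathcal C_{c]mrd}\zeta^m\mathcal F^{rd}+4\zeta^m\zeta^r\mathcal C_{mar[c}\sigma_{b]}$. *)

theory Defs
  imports "HOL-Analysis.Analysis" "HOL-Library.Numeral_Type"
begin

text \<open>Local (chart) model: a 4-dimensional spacetime is represented on a coordinate
  domain U, an open subset of real^4. Index values are elements of the 4-element type 4.
  Tensors are given by their components in the coordinate basis.\<close>

type_synonym pt = "real^4"

definition pd :: "(pt \<Rightarrow> 'b::real_normed_vector) \<Rightarrow> 4 \<Rightarrow> pt \<Rightarrow> 'b" where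
  "pd f a x = frechet_derivative f (at x) (axis a 1)"

primrec pds :: "(pt \<Rightarrow> 'b::real_normed_vector) \<Rightarrow> 4 list \<Rightarrow> pt \<Rightarrow> 'b" where
  "pds f [] = f"
| "pds f (a # as) = pd (pds f as) a"

definition smooth_on :: "pt set \<Rightarrow> (pt \<Rightarrow> 'b::real_normed_vector) \<Rightarrow> bool" where
  "smooth_on U f \<longleftrightarrow> (\<forall>as. \<forall>x\<in>U. pds f as differentiable (at x))"

definition minkowski :: "real^4^4" where
  "minkowski = (\<chi> i j. if i = j then (if i = 0 then -1 else 1) else 0)"

definition lorentzian_matrix :: "real^4^4 \<Rightarrow> bool" where
  "lorentzian_matrix G \<longleftrightarrow> transpose G = G \<and>
     (\<exists>P::real^4^4. invertible P \<and> transpose P ** G ** P = minkowski)"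

definition ginv :: "(pt \<Rightarrow> real^4^4) \<Rightarrow> pt \<Rightarrow> real^4^4" where
  "ginv g x = matrix_inv (g x)"

definition christ :: "(pt \<Rightarrow> real^4^4) \<Rightarrow> pt \<Rightarrow> 4 \<Rightarrow> 4 \<Rightarrow> 4 \<Rightarrow> real" where
  "christ g x a b c = (1/2) * (\<Sum>d\<in>UNIV. ginv g x $ a $ d *
      (pd (\<lambda>y. g y $ d $ c) b x + pd (\<lambda>y. g y $ d $ b) c x - pd (\<lambda>y. g y $ b $ c) d x))"

text \<open>Riemann tensor R^a_{bcd} (convention: [nabla_c, nabla_d] V^a = R^a_{bcd} V^b).\<close>
definition riem_up :: "(pt \<Rightarrow> real^4^4) \<Rightarrow> pt \<Rightarrow> 4 \<Rightarrow> 4 \<Rightarrow> 4 \<Rightarrow> 4 \<Rightarrow> real" where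
  "riem_up g x a b c d =
     pd (\<lambda>y. christ g y a d b) c x - pd (\<lambda>y. christ g y a c b) d x
     + (\<Sum>e\<in>UNIV. christ g x a c e * christ g x e d b - christ g x a d e * christ g x e c b)"

definition riem :: "(pt \<Rightarrow> real^4^4) \<Rightarrow> pt \<Rightarrow> 4 \<Rightarrow> 4 \<Rightarrow> 4 \<Rightarrow> 4 \<Rightarrow> real" where
  "riem g x a b c d = (\<Sum>e\<in>UNIV. g x $ a $ e * riem_up g x e b c d)"

definition ricci :: "(pt \<Rightarrow> real^4^4) \<Rightarrow> pt \<Rightarrow> 4 \<Rightarrow> 4 \<Rightarrow> real" where
  "ricci g x b d = (\<Sum>a\<in>UNIV. riem_up g x a b a d)"

definition scal :: "(pt \<Rightarrow> real^4^4) \<Rightarrow> pt \<Rightarrow> real" where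
  "scal g x = (\<Sum>b\<in>UNIV. \<Sum>d\<in>UNIV. ginv g x $ b $ d * ricci g x b d)"

definition weyl :: "(pt \<Rightarrow> real^4^4) \<Rightarrow> pt \<Rightarrow> 4 \<Rightarrow> 4 \<Rightarrow> 4 \<Rightarrow> 4 \<Rightarrow> real" where
  "weyl g x a b c d = riem g x a b c d
     - (1/2) * (g x $ a $ c * ricci g x d b - g x $ a $ d * ricci g x c b
                - g x $ b $ c * ricci g x d a + g x $ b $ d * ricci g x c a)
     + (1/6) * scal g x * (g x $ a $ c * g x $ d $ b - g x $ a $ d * g x $ c $ b)"

text \<open>Levi-Civita symbol: determinant of the permutation matrix (0,1,2,3) -> (a,b,c,d).\<close>
definition idx4 :: "4 \<Rightarrow> 4 \<Rightarrow> 4 \<Rightarrow> 4 \<Rightarrow> 4 \<Rightarrow> 4" where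
  "idx4 a b c d i = (if i = 0 then a else if i = 1 then b else if i = 2 then c else d)"

definition levi_civita :: "4 \<Rightarrow> 4 \<Rightarrow> 4 \<Rightarrow> 4 \<Rightarrow> real" where
  "levi_civita a b c d = det (\<chi> i. axis (idx4 a b c d i) (1::real))"

text \<open>Volume form eta_abcd = s sqrt|det g| epsilon_abcd, with s = +-1 the orientation.\<close>
definition vol :: "(pt \<Rightarrow> real^4^4) \<Rightarrow> (pt \<Rightarrow> real) \<Rightarrow> pt \<Rightarrow> 4 \<Rightarrow> 4 \<Rightarrow> 4 \<Rightarrow> 4 \<Rightarrow> real" where
  "vol g s x a b c d = s x * sqrt \<bar>det (g x)\<bar> * levi_civita a b c d"

text \<open>zeta_b = g_bc zeta^c (zeta given by contravariant components).\<close>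
definition zlow :: "(pt \<Rightarrow> real^4^4) \<Rightarrow> (pt \<Rightarrow> real^4) \<Rightarrow> pt \<Rightarrow> 4 \<Rightarrow> real" where
  "zlow g \<zeta> x b = (\<Sum>c\<in>UNIV. g x $ b $ c * \<zeta> x $ c)"

definition Fk :: "(pt \<Rightarrow> real^4^4) \<Rightarrow> (pt \<Rightarrow> real^4) \<Rightarrow> pt \<Rightarrow> 4 \<Rightarrow> 4 \<Rightarrow> real" where
  "Fk g \<zeta> x a b = pd (\<lambda>y. zlow g \<zeta> y b) a x - (\<Sum>c\<in>UNIV. christ g x c a b * zlow g \<zeta> x c)"

definition lam :: "(pt \<Rightarrow> real^4^4) \<Rightarrow> (pt \<Rightarrow> real^4) \<Rightarrow> pt \<Rightarrow> real" where
  "lam g \<zeta> x = (\<Sum>a\<in>UNIV. zlow g \<zeta> x a * \<zeta> x $ a)"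

definition Fup :: "(pt \<Rightarrow> real^4^4) \<Rightarrow> (pt \<Rightarrow> real^4) \<Rightarrow> pt \<Rightarrow> 4 \<Rightarrow> 4 \<Rightarrow> real" where
  "Fup g \<zeta> x c d = (\<Sum>p\<in>UNIV. \<Sum>q\<in>UNIV. ginv g x $ c $ p * ginv g x $ d $ q * Fk g \<zeta> x p q)"

definition Fstar :: "(pt \<Rightarrow> real^4^4) \<Rightarrow> (pt \<Rightarrow> real) \<Rightarrow> (pt \<Rightarrow> real^4) \<Rightarrow> pt \<Rightarrow> 4 \<Rightarrow> 4 \<Rightarrow> real" where
  "Fstar g s \<zeta> x a b = (1/2) * (\<Sum>c\<in>UNIV. \<Sum>d\<in>UNIV. vol g s x a b c d * Fup g \<zeta> x c d)"

definition cF :: "(pt \<Rightarrow> real^4^4) \<Rightarrow> (pt \<Rightarrow> real) \<Rightarrow> (pt \<Rightarrow> real^4) \<Rightarrow> pt \<Rightarrow> 4 \<Rightarrow> 4 \<Rightarrow> complex" where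
  "cF g s \<zeta> x a b = complex_of_real (Fk g \<zeta> x a b) + \<i> * complex_of_real (Fstar g s \<zeta> x a b)"

definition cFup :: "(pt \<Rightarrow> real^4^4) \<Rightarrow> (pt \<Rightarrow> real) \<Rightarrow> (pt \<Rightarrow> real^4) \<Rightarrow> pt \<Rightarrow> 4 \<Rightarrow> 4 \<Rightarrow> complex" where
  "cFup g s \<zeta> x r d = (\<Sum>p\<in>UNIV. \<Sum>q\<in>UNIV.
      complex_of_real (ginv g x $ r $ p * ginv g x $ d $ q) * cF g s \<zeta> x p q)"

definition cFF :: "(pt \<Rightarrow> real^4^4) \<Rightarrow> (pt \<Rightarrow> real) \<Rightarrow> (pt \<Rightarrow> real^4) \<Rightarrow> pt \<Rightarrow> complex" where
  "cFF g s \<zeta> x = (\<Sum>a\<in>UNIV. \<Sum>b\<in>UNIV. cF g s \<zeta> x a b * cFup g s \<zeta> x a b)"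

definition ernst :: "(pt \<Rightarrow> real^4^4) \<Rightarrow> (pt \<Rightarrow> real) \<Rightarrow> (pt \<Rightarrow> real^4) \<Rightarrow> pt \<Rightarrow> 4 \<Rightarrow> complex" where
  "ernst g s \<zeta> x a = 2 * (\<Sum>b\<in>UNIV. cF g s \<zeta> x a b * complex_of_real (\<zeta> x $ b))"

definition gam :: "(pt \<Rightarrow> real^4^4) \<Rightarrow> (pt \<Rightarrow> real^4) \<Rightarrow> pt \<Rightarrow> 4 \<Rightarrow> 4 \<Rightarrow> real" where
  "gam g \<zeta> x a b = zlow g \<zeta> x a * zlow g \<zeta> x b - lam g \<zeta> x * g x $ a $ b"

definition Cstar :: "(pt \<Rightarrow> real^4^4) \<Rightarrow> (pt \<Rightarrow> real) \<Rightarrow> pt \<Rightarrow> 4 \<Rightarrow> 4 \<Rightarrow> 4 \<Rightarrow> 4 \<Rightarrow> real" where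
  "Cstar g s x a b c d = (1/2) * (\<Sum>p\<in>UNIV. \<Sum>q\<in>UNIV. vol g s x c d p q *
      (\<Sum>u\<in>UNIV. \<Sum>v\<in>UNIV. ginv g x $ p $ u * ginv g x $ q $ v * weyl g x a b u v))"

definition cC :: "(pt \<Rightarrow> real^4^4) \<Rightarrow> (pt \<Rightarrow> real) \<Rightarrow> pt \<Rightarrow> 4 \<Rightarrow> 4 \<Rightarrow> 4 \<Rightarrow> 4 \<Rightarrow> complex" where
  "cC g s x a b c d = complex_of_real (weyl g x a b c d) + \<i> * complex_of_real (Cstar g s x a b c d)"

definition cI :: "(pt \<Rightarrow> real^4^4) \<Rightarrow> (pt \<Rightarrow> real) \<Rightarrow> pt \<Rightarrow> 4 \<Rightarrow> 4 \<Rightarrow> 4 \<Rightarrow> 4 \<Rightarrow> complex" where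
  "cI g s x a b c d = (1/4) * (\<i> * complex_of_real (vol g s x a b c d)
      + complex_of_real (g x $ a $ c * g x $ b $ d - g x $ a $ d * g x $ b $ c))"

definition cQ :: "(pt \<Rightarrow> real^4^4) \<Rightarrow> (pt \<Rightarrow> real) \<Rightarrow> (pt \<Rightarrow> real^4) \<Rightarrow> pt \<Rightarrow> 4 \<Rightarrow> 4 \<Rightarrow> 4 \<Rightarrow> 4 \<Rightarrow> complex" where
  "cQ g s \<zeta> x a b c d = 6 * (cF g s \<zeta> x a b * cF g s \<zeta> x c d - (1/3) * cI g s x a b c d * cFF g s \<zeta> x)"

text \<open>Mars-Simon tensor S(sigma')_abcd = C_abcd + Q_abcd / sigma' (sigma' = value of the potential).\<close>
definition mars_simon :: "(pt \<Rightarrow> real^4^4) \<Rightarrow> (pt \<Rightarrow> real) \<Rightarrow> (pt \<Rightarrow> real^4) \<Rightarrow> complex \<Rightarrow> pt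
     \<Rightarrow> 4 \<Rightarrow> 4 \<Rightarrow> 4 \<Rightarrow> 4 \<Rightarrow> complex" where
  "mars_simon g s \<zeta> sp x a b c d = cC g s x a b c d + cQ g s \<zeta> x a b c d / sp"

text \<open>The expression gamma_a[b T_c]mrd zeta^m F^rd + 4 zeta^m zeta^r T_mar[c sigma_b]
  for a 4-index complex tensor T (antisymmetrisation with weight 1/2).\<close>
definition simon_expr :: "(pt \<Rightarrow> real^4^4) \<Rightarrow> (pt \<Rightarrow> real) \<Rightarrow> (pt \<Rightarrow> real^4) \<Rightarrow> pt
     \<Rightarrow> (4 \<Rightarrow> 4 \<Rightarrow> 4 \<Rightarrow> 4 \<Rightarrow> complex) \<Rightarrow> 4 \<Rightarrow> 4 \<Rightarrow> 4 \<Rightarrow> complex" where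
  "simon_expr g s \<zeta> x T a b c =
     (1/2) * (complex_of_real (gam g \<zeta> x a b) *
                (\<Sum>m\<in>UNIV. \<Sum>r\<in>UNIV. \<Sum>d\<in>UNIV. T c m r d * complex_of_real (\<zeta> x $ m) * cFup g s \<zeta> x r d)
            - complex_of_real (gam g \<zeta> x a c) *
                (\<Sum>m\<in>UNIV. \<Sum>r\<in>UNIV. \<Sum>d\<in>UNIV. T b m r d * complex_of_real (\<zeta> x $ m) * cFup g s \<zeta> x r d))
   + 4 * ((1/2) * ((\<Sum>m\<in>UNIV. \<Sum>r\<in>UNIV. complex_of_real (\<zeta> x $ m * \<zeta> x $ r) * T m a r c) * ernst g s \<zeta> x b
                  - (\<Sum>m\<in>UNIV. \<Sum>r\<in>UNIV. complex_of_real (\<zeta> x $ m * \<zeta> x $ r) * T m a r b) * ernst g s \<zeta> x c))"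

definition simon :: "(pt \<Rightarrow> real^4^4) \<Rightarrow> (pt \<Rightarrow> real) \<Rightarrow> (pt \<Rightarrow> real^4) \<Rightarrow> pt \<Rightarrow> 4 \<Rightarrow> 4 \<Rightarrow> 4 \<Rightarrow> complex" where
  "simon g s \<zeta> x = simon_expr g s \<zeta> x (cC g s x)"

end

theory Submission
  imports Defs
begin

text \<open>
  The Mars-Simon tensor is S(\<sigma>') = \<C> + \<Q>/\<sigma>', and the Simon expression
    \<Sigma>(T)_abc = \<gamma>_a[b T_c]mrd \<zeta>^m \<F>^rd + 4 \<zeta>^m \<zeta>^r T_mar[c \<sigma>_b]
  is linear in the 4-tensor T.  The space-time Simon tensor is \<Sigma>(\<C>), so the theorem reduces
  to the pointwise identity \<Sigma>(\<Q>) = 0.  It follows from two contractions of \<Q>: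
    \<Q>_cmrd \<zeta>^m \<F>^rd = 2 \<sigma>_c (\<F>\<cdot>\<F>),   because the projector \<I> fixes the self-dual form \<F>,
                                        which rests on \<star>\<star> = -1 for 2-forms in Lorentzian signature;
    \<zeta>^m \<zeta>^r \<Q>_marc = (3/2) \<sigma>_a \<sigma>_c + (1/2) (\<F>\<cdot>\<F>) \<gamma>_ac,   because \<zeta>^m \<zeta>^r \<I>_marc = -\<gamma>_ac / 4.
  Substituted into \<Sigma>(\<Q>) the terms cancel pairwise.  In particular the identity holds for
  every value of \<sigma>', so neither the potential property nor smoothness is needed.
\<close>

lemma index4_cases: "(i::4) = 0 \<or> i = 1 \<or> i = 2 \<or> i = 3"
proof -
  have "(4::4) = 0" by simp
  then show ?thesis using exhaust_4[of i] by auto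
qed

lemma UNIV_4: "(UNIV::4 set) = {0, 1, 2, 3}"
  using index4_cases by blast

lemma sum_UNIV_4: "sum f (UNIV::4 set) = f 0 + f 1 + f 2 + f 3"
  unfolding UNIV_4 by (simp add: add.assoc)

lemma prod_UNIV_4: "prod f (UNIV::4 set) = f 0 * f 1 * f 2 * f 3"
  unfolding UNIV_4 by (simp add: mult.assoc)

lemma sum_maps_4:
  fixes G :: "(4 \<Rightarrow> 4) \<Rightarrow> real"
  shows "sum G {h. \<forall>i. h i \<in> UNIV} = (\<Sum>p\<in>UNIV. \<Sum>q\<in>UNIV. \<Sum>a\<in>UNIV. \<Sum>b\<in>UNIV. G (idx4 p q a b))"
proof -
  let ?k = "\<lambda>(p, q, a, b). idx4 p q a b"
  have "inj ?k"
  proof (rule injI, clarsimp)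
    fix p q a b p' q' a' b' :: 4
    assume "idx4 p q a b = idx4 p' q' a' b'"
    from fun_cong[OF this, of 0] fun_cong[OF this, of 1] fun_cong[OF this, of 2] fun_cong[OF this, of 3]
    show "p = p' \<and> q = q' \<and> a = a' \<and> b = b'" by (simp add: idx4_def)
  qed
  moreover have "range ?k = UNIV"
  proof (rule surjI)
    fix h :: "4 \<Rightarrow> 4"
    show "?k (h 0, h 1, h 2, h 3) = h"
    proof
      fix i :: 4 show "?k (h 0, h 1, h 2, h 3) i = h i"
        using index4_cases[of i] by (auto simp: idx4_def)
    qed
  qed
  ultimately show ?thesis
    using sum.reindex[of ?k UNIV G] by (simp add: sum.cartesian_product case_prod_beta)
qed

lemma sum_pull_innermost_4:
  "(\<Sum>p\<in>A. \<Sum>q\<in>B. \<Sum>a\<in>C. \<Sum>b\<in>D. \<Sum>u\<in>E. \<Sum>v\<in>F. f p q a b u v)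
   = (\<Sum>u\<in>E. \<Sum>v\<in>F. \<Sum>p\<in>A. \<Sum>q\<in>B. \<Sum>a\<in>C. \<Sum>b\<in>D. f p q a b u v)"
  by (simp only: sum.swap[of _ F]) (simp only: sum.swap[of _ E])

lemma sum_pull_innermost_2:
  "(\<Sum>r\<in>A. \<Sum>d\<in>B. \<Sum>u\<in>C. \<Sum>v\<in>D. f r d u v) = (\<Sum>u\<in>C. \<Sum>v\<in>D. \<Sum>r\<in>A. \<Sum>d\<in>B. f r d u v)"
  by (simp only: sum.swap[of _ D]) (simp only: sum.swap[of _ C])

lemma sum_symmetric_antisymmetric:
  fixes z :: "'a \<Rightarrow> 'b::linordered_idom"
  assumes anti: "\<And>m r. A m r = - A r m"
  shows "(\<Sum>m\<in>I. \<Sum>r\<in>I. z m * z r * A m r) = 0"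
proof -
  have "(\<Sum>m\<in>I. \<Sum>r\<in>I. z m * z r * A m r) = (\<Sum>r\<in>I. \<Sum>m\<in>I. z m * z r * A m r)"
    by (rule sum.swap)
  also have "\<dots> = (\<Sum>r\<in>I. \<Sum>m\<in>I. - (z r * z m * A r m))"
  proof (intro sum.cong refl)
    fix r m
    show "z m * z r * A m r = - (z r * z m * A r m)" using anti[of m r] by (simp add: algebra_simps)
  qed
  also have "\<dots> = - (\<Sum>m\<in>I. \<Sum>r\<in>I. z m * z r * A m r)"
    by (simp only: sum_negf)
  finally show ?thesis by simp
qed

section \<open>The Levi-Civita symbol\<close>

lemma det_axis_rows_permute:
  fixes f f' :: "'n::finite \<Rightarrow> 'n"
  assumes p: "p permutes (UNIV::'n set)" and f': "\<And>i. f' i = f (p i)"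
  shows "det (\<chi> i. axis (f' i) (1::real)) = of_int (sign p) * det (\<chi> i. axis (f i) (1::real))"
proof -
  have "(\<chi> i. axis (f' i) (1::real)) = (\<chi> i. (\<chi> i. axis (f i) (1::real)) $ p i)"
    using f' by (simp add: vec_eq_iff)
  then show ?thesis by (simp only: det_permute_rows[OF p])
qed

lemma levi_civita_swap:
  "levi_civita b a c d = - levi_civita a b c d"
  "levi_civita a c b d = - levi_civita a b c d"
  "levi_civita a b d c = - levi_civita a b c d"
proof -
  have swap: "levi_civita a' b' c' d' = - levi_civita a b c d"
    if "\<And>k. idx4 a' b' c' d' k = idx4 a b c d (Transposition.transpose i j k)" and "i \<noteq> j"
    for a' b' c' d' and i j :: 4
  proof -
    have "levi_civita a' b' c' d' = of_int (sign (Transposition.transpose i j)) * levi_civita a b c d"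
      unfolding levi_civita_def by (rule det_axis_rows_permute) (simp_all add: permutes_swap_id that)
    then show ?thesis using \<open>i \<noteq> j\<close> by (simp add: sign_swap_id)
  qed
  show "levi_civita b a c d = - levi_civita a b c d"
    by (rule swap[of _ _ _ _ 0 1]) (auto simp: idx4_def Transposition.transpose_def)
  show "levi_civita a c b d = - levi_civita a b c d"
    by (rule swap[of _ _ _ _ 1 2]) (auto simp: idx4_def Transposition.transpose_def)
  show "levi_civita a b d c = - levi_civita a b c d"
    by (rule swap[of _ _ _ _ 2 3]) (use index4_cases in \<open>auto simp: idx4_def Transposition.transpose_def\<close>)
qed

lemma levi_civita_0123: "levi_civita 0 1 2 3 = 1"
proof -
  have "(\<chi> i. axis (idx4 0 1 2 3 i) (1::real)) = mat 1"
    unfolding vec_eq_iff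
  proof (intro allI)
    fix i j :: 4
    show "(\<chi> i. axis (idx4 0 1 2 3 i) (1::real)) $ i $ j = mat 1 $ i $ j"
      using index4_cases[of i] by (elim disjE) (simp_all add: idx4_def axis_def mat_def)
  qed
  then show ?thesis by (simp add: levi_civita_def)
qed

text \<open>Rewrite rules that sort the slots of the symbol into increasing order; together with
  the value at (0,1,2,3) they evaluate \<epsilon> on every permutation of the indices.\<close>
lemmas levi_civita_sort =
  levi_civita_swap(1)[where a=0 and b=1] levi_civita_swap(1)[where a=0 and b=2] levi_civita_swap(1)[where a=0 and b=3]
  levi_civita_swap(1)[where a=1 and b=2] levi_civita_swap(1)[where a=1 and b=3] levi_civita_swap(1)[where a=2 and b=3]
  levi_civita_swap(2)[where b=0 and c=1] levi_civita_swap(2)[where b=0 and c=2] levi_civita_swap(2)[where b=0 and c=3]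
  levi_civita_swap(2)[where b=1 and c=2] levi_civita_swap(2)[where b=1 and c=3] levi_civita_swap(2)[where b=2 and c=3]
  levi_civita_swap(3)[where c=0 and d=1] levi_civita_swap(3)[where c=0 and d=2] levi_civita_swap(3)[where c=0 and d=3]
  levi_civita_swap(3)[where c=1 and d=2] levi_civita_swap(3)[where c=1 and d=3] levi_civita_swap(3)[where c=2 and d=3]

lemma levi_civita_repeated [simp]:
  "levi_civita a a c d = 0" "levi_civita a b b d = 0" "levi_civita a b c c = 0"
  "levi_civita a b a d = 0" "levi_civita a b c b = 0" "levi_civita a b c a = 0"
proof -
  have adjacent: "levi_civita a a c d = 0" "levi_civita a b b d = 0" "levi_civita a b c c = 0"
    for a b c d using levi_civita_swap[of a a c d] levi_civita_swap[of a b b d]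
      levi_civita_swap[of a b c c] by simp_all
  then show "levi_civita a a c d = 0" "levi_civita a b b d = 0" "levi_civita a b c c = 0"
    by simp_all
  show "levi_civita a b a d = 0" "levi_civita a b c b = 0"
    using levi_civita_swap(2)[of a b a d] levi_civita_swap(3)[of a b c b] adjacent by simp_all
  show "levi_civita a b c a = 0"
    using levi_civita_swap(3)[of a b c a] levi_civita_swap(2)[of a a b c] adjacent by simp
qed

lemma levi_civita_values:
  "levi_civita 0 1 2 3 = 1" "levi_civita 0 1 3 2 = -1" "levi_civita 0 2 1 3 = -1" "levi_civita 0 2 3 1 = 1"
  "levi_civita 0 3 1 2 = 1" "levi_civita 0 3 2 1 = -1" "levi_civita 1 0 2 3 = -1" "levi_civita 1 0 3 2 = 1"
  "levi_civita 1 2 0 3 = 1" "levi_civita 1 2 3 0 = -1" "levi_civita 1 3 0 2 = -1" "levi_civita 1 3 2 0 = 1"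
  "levi_civita 2 0 1 3 = 1" "levi_civita 2 0 3 1 = -1" "levi_civita 2 1 0 3 = -1" "levi_civita 2 1 3 0 = 1"
  "levi_civita 2 3 0 1 = 1" "levi_civita 2 3 1 0 = -1" "levi_civita 3 0 1 2 = -1" "levi_civita 3 0 2 1 = 1"
  "levi_civita 3 1 0 2 = 1" "levi_civita 3 1 2 0 = -1" "levi_civita 3 2 0 1 = -1" "levi_civita 3 2 1 0 = 1"
  by (simp_all add: levi_civita_sort levi_civita_0123)

lemma levi_civita_contract:
  "(\<Sum>r\<in>UNIV. \<Sum>d\<in>UNIV. levi_civita c m r d * levi_civita r d u v)
   = 2 * ((if c = u \<and> m = v then 1 else 0) - (if c = v \<and> m = u then 1 else 0))"
  using index4_cases[of c] index4_cases[of m] index4_cases[of u] index4_cases[of v]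
  by (elim disjE) (simp_all add: sum_UNIV_4 levi_civita_values)

lemma levi_civita_transform:
  fixes H :: "real^4^4"
  shows "(\<Sum>p\<in>UNIV. \<Sum>q\<in>UNIV. \<Sum>a\<in>UNIV. \<Sum>b\<in>UNIV.
            H$r$p * H$d$q * H$u$a * H$v$b * levi_civita p q a b) = det H * levi_civita r d u v"
proof -
  let ?f = "idx4 r d u v"
  have "(\<chi> i. axis (?f i) (1::real)) ** H = (\<chi> i. H $ ?f i)"
    by (simp add: vec_eq_iff matrix_matrix_mult_def axis_def if_distrib[of "\<lambda>x. x * _"] cong: if_cong)
  then have "levi_civita r d u v * det H = det (\<chi> i. H $ ?f i)"
    by (metis levi_civita_def det_mul)
  also have "(\<chi> i. H $ ?f i) = (\<chi> i. \<Sum>p\<in>UNIV. (H $ ?f i $ p) *s axis p (1::real))"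
    by (simp add: basis_expansion)
  also have "det \<dots> = (\<Sum>h\<in>{h. \<forall>i. h i \<in> UNIV}. det (\<chi> i. (H $ ?f i $ h i) *s axis (h i) (1::real)))"
    by (rule det_linear_rows_sum) simp
  also have "\<dots> = (\<Sum>h\<in>{h. \<forall>i. h i \<in> UNIV}. (\<Prod>i\<in>UNIV. H $ ?f i $ h i) * det (\<chi> i. axis (h i) (1::real)))"
    by (simp only: det_rows_mul)
  also have "\<dots> = (\<Sum>p\<in>UNIV. \<Sum>q\<in>UNIV. \<Sum>a\<in>UNIV. \<Sum>b\<in>UNIV.
            H$r$p * H$d$q * H$u$a * H$v$b * levi_civita p q a b)"
    by (simp only: sum_maps_4) (simp add: prod_UNIV_4 levi_civita_def idx4_def)
  finally show ?thesis by (simp add: mult.commute)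
qed

section \<open>Raising indices and the Hodge star\<close>

definition raise2 :: "real^4^4 \<Rightarrow> (4 \<Rightarrow> 4 \<Rightarrow> real) \<Rightarrow> 4 \<Rightarrow> 4 \<Rightarrow> real" where
  "raise2 H K r d = (\<Sum>p\<in>UNIV. \<Sum>q\<in>UNIV. H $ r $ p * H $ d $ q * K p q)"

definition hodge :: "real \<Rightarrow> real^4^4 \<Rightarrow> (4 \<Rightarrow> 4 \<Rightarrow> real) \<Rightarrow> 4 \<Rightarrow> 4 \<Rightarrow> real" where
  "hodge k H K p q = (1/2) * (\<Sum>a\<in>UNIV. \<Sum>b\<in>UNIV. k * levi_civita p q a b * raise2 H K a b)"

lemma hodge_anti: "hodge k H K p q = - hodge k H K q p"
  unfolding hodge_def by (simp add: levi_civita_swap(1)[of q p] sum_negf)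

lemma raise2_hodge:
  fixes H :: "real^4^4"
  assumes H_sym: "\<And>i j. H $ i $ j = H $ j $ i"
  shows "raise2 H (hodge k H F) r d = (k/2) * det H * (\<Sum>u\<in>UNIV. \<Sum>v\<in>UNIV. levi_civita r d u v * F u v)"
proof -
  have "raise2 H (hodge k H F) r d
    = (k/2) * (\<Sum>p\<in>UNIV. \<Sum>q\<in>UNIV. \<Sum>a\<in>UNIV. \<Sum>b\<in>UNIV. \<Sum>u\<in>UNIV. \<Sum>v\<in>UNIV.
          H$r$p * H$d$q * H$u$a * H$v$b * levi_civita p q a b * F u v)"
    unfolding raise2_def hodge_def
    by (simp add: sum_distrib_left sum_distrib_right H_sym[of _ a for a] mult_ac)
  also have "\<dots> = (k/2) * (\<Sum>u\<in>UNIV. \<Sum>v\<in>UNIV. \<Sum>p\<in>UNIV. \<Sum>q\<in>UNIV. \<Sum>a\<in>UNIV. \<Sum>b\<in>UNIV.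
          H$r$p * H$d$q * H$u$a * H$v$b * levi_civita p q a b * F u v)"
    by (subst sum_pull_innermost_4) (rule refl)
  also have "\<dots> = (k/2) * (\<Sum>u\<in>UNIV. \<Sum>v\<in>UNIV. (det H * levi_civita r d u v) * F u v)"
    by (simp add: levi_civita_transform[symmetric] sum_distrib_right)
  finally show ?thesis by (simp add: sum_distrib_left mult_ac)
qed

lemma contract_antisym_delta:
  fixes F :: "4 \<Rightarrow> 4 \<Rightarrow> real"
  shows "(\<Sum>u\<in>UNIV. \<Sum>v\<in>UNIV. (2 * ((if c = u \<and> m = v then 1 else 0) - (if c = v \<and> m = u then 1 else 0))) * F u v)
     = 2 * (F c m - F m c)"
  using index4_cases[of c] index4_cases[of m] by (elim disjE) (simp_all add: sum_UNIV_4 algebra_simps)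

text \<open>In Lorentzian signature (k k det H = -1, i.e. det g < 0) the Hodge star on 2-forms
  squares to minus the identity.\<close>
lemma hodge_hodge:
  fixes H :: "real^4^4" and F :: "4 \<Rightarrow> 4 \<Rightarrow> real"
  assumes H_sym: "\<And>i j. H $ i $ j = H $ j $ i"
    and lorentz: "k * k * det H = -1"
    and F_anti: "\<And>i j. F i j = - F j i"
  shows "hodge k H (hodge k H F) c m = - F c m"
proof -
  have "hodge k H (hodge k H F) c m
      = (k * k * det H / 4) * (\<Sum>r\<in>UNIV. \<Sum>d\<in>UNIV. \<Sum>u\<in>UNIV. \<Sum>v\<in>UNIV.
           levi_civita c m r d * levi_civita r d u v * F u v)"
    unfolding hodge_def[of k H "hodge k H F"] raise2_hodge[OF H_sym]
    by (simp add: sum_distrib_left mult_ac)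
  also have "\<dots> = (k * k * det H / 4) * (\<Sum>u\<in>UNIV. \<Sum>v\<in>UNIV.
           (\<Sum>r\<in>UNIV. \<Sum>d\<in>UNIV. levi_civita c m r d * levi_civita r d u v) * F u v)"
    by (subst sum_pull_innermost_2) (simp only: sum_distrib_right)
  also have "\<dots> = (k * k * det H / 4) * (2 * (F c m - F m c))"
    by (simp only: levi_civita_contract contract_antisym_delta)
  finally show ?thesis using lorentz F_anti[of m c] by simp
qed

lemma lower_raise2:
  fixes G H :: "real^4^4" and K :: "4 \<Rightarrow> 4 \<Rightarrow> real"
  assumes inverse: "\<And>i j. (\<Sum>k\<in>UNIV. G$i$k * H$k$j) = (if i = j then 1 else 0)"
  shows "(\<Sum>r\<in>UNIV. \<Sum>d\<in>UNIV. G$c$r * G$m$d * raise2 H K r d) = K c m"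
proof -
  have "(\<Sum>r\<in>UNIV. \<Sum>d\<in>UNIV. G$c$r * G$m$d * raise2 H K r d)
      = (\<Sum>r\<in>UNIV. \<Sum>d\<in>UNIV. \<Sum>p\<in>UNIV. \<Sum>q\<in>UNIV. (G$c$r * H$r$p) * (G$m$d * H$d$q) * K p q)"
    unfolding raise2_def by (simp only: sum_distrib_left) (simp only: mult_ac)
  also have "\<dots> = (\<Sum>p\<in>UNIV. \<Sum>q\<in>UNIV. \<Sum>r\<in>UNIV. \<Sum>d\<in>UNIV. (G$c$r * H$r$p) * (G$m$d * H$d$q) * K p q)"
    by (subst sum_pull_innermost_2) (rule refl)
  also have "\<dots> = (\<Sum>p\<in>UNIV. \<Sum>q\<in>UNIV. (\<Sum>r\<in>UNIV. G$c$r * H$r$p) * (\<Sum>d\<in>UNIV. G$m$d * H$d$q) * K p q)"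
    by (simp only: sum_product) (simp only: sum_distrib_right)
  also have "\<dots> = (\<Sum>p\<in>UNIV. \<Sum>q\<in>UNIV. (if c = p then 1 else 0) * (if m = q then 1 else 0) * K p q)"
    by (simp only: inverse)
  also have "\<dots> = K c m"
    using index4_cases[of c] index4_cases[of m] by (elim disjE) (simp_all add: sum_UNIV_4)
  finally show ?thesis .
qed

lemma lower_raise2_antisym:
  fixes G H :: "real^4^4" and K :: "4 \<Rightarrow> 4 \<Rightarrow> real"
  assumes inverse: "\<And>i j. (\<Sum>k\<in>UNIV. G$i$k * H$k$j) = (if i = j then 1 else 0)"
  shows "(\<Sum>r\<in>UNIV. \<Sum>d\<in>UNIV. (G$c$r * G$m$d - G$c$d * G$m$r) * raise2 H K r d) = K c m - K m c"
proof -
  have "(\<Sum>r\<in>UNIV. \<Sum>d\<in>UNIV. G$c$d * G$m$r * raise2 H K r d) = K m c"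
    using lower_raise2[OF inverse, of m c K] by (simp add: mult_ac)
  moreover have "(\<Sum>r\<in>UNIV. \<Sum>d\<in>UNIV. (G$c$r * G$m$d - G$c$d * G$m$r) * raise2 H K r d)
     = (\<Sum>r\<in>UNIV. \<Sum>d\<in>UNIV. G$c$r * G$m$d * raise2 H K r d)
       - (\<Sum>r\<in>UNIV. \<Sum>d\<in>UNIV. G$c$d * G$m$r * raise2 H K r d)"
    by (simp add: left_diff_distrib sum_subtractf)
  ultimately show ?thesis by (simp only: lower_raise2[OF inverse])
qed

lemma det_minkowski: "det minkowski = (-1::real)"
  by (subst det_diagonal) (auto simp: minkowski_def prod_UNIV_4)

text \<open>By Sylvester's law a Lorentzian metric has negative determinant.\<close>
lemma lorentzian_det_neg:
  assumes "lorentzian_matrix G"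
  shows "det G < 0"
proof -
  obtain P :: "real^4^4" where "transpose P ** G ** P = minkowski"
    using assms by (auto simp: lorentzian_matrix_def)
  then have "det (transpose P ** G ** P) = -1"
    using det_minkowski by simp
  then have "det G * (det P * det P) = -1"
    by (simp add: det_mul det_transpose mult_ac)
  moreover have "det P * det P \<ge> 0" by simp
  ultimately show ?thesis by (smt (verit) mult_nonneg_nonneg)
qed

lemma symmetric_matrix_entries:
  assumes "transpose A = A"
  shows "A $ i $ j = A $ j $ i"
proof -
  have "transpose A $ i $ j = A $ i $ j" using assms by simp
  then show ?thesis by (simp add: transpose_def)
qed

text \<open>Hilbert choice in the definition of matrix_inv yields a two-sided inverse.\<close>
lemma matrix_inv_inverse:
  assumes "invertible (A :: 'a::semiring_1^'n^'n)"
  shows "A ** matrix_inv A = mat 1" and "matrix_inv A ** A = mat 1"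
proof -
  have "A ** matrix_inv A = mat 1 \<and> matrix_inv A ** A = mat 1"
    using assms unfolding invertible_def matrix_inv_def by (rule someI_ex)
  then show "A ** matrix_inv A = mat 1" and "matrix_inv A ** A = mat 1" by simp_all
qed

lemma matrix_inv_symmetric:
  fixes A :: "'a::comm_ring_1^'n^'n"
  assumes sym: "transpose A = A" and inv: "invertible A"
  shows "transpose (matrix_inv A) = matrix_inv A"
proof -
  have "A ** transpose (matrix_inv A) = mat 1"
    using arg_cong[OF matrix_inv_inverse(2)[OF inv], of transpose]
    by (simp add: matrix_transpose_mul sym transpose_mat)
  then have "transpose (matrix_inv A) = (matrix_inv A ** A) ** transpose (matrix_inv A)"
    by (simp add: matrix_inv_inverse(2)[OF inv] matrix_mul_assoc)
  also have "\<dots> = matrix_inv A"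
    using \<open>A ** transpose (matrix_inv A) = mat 1\<close> by (simp add: matrix_mul_assoc[symmetric])
  finally show ?thesis .
qed

section \<open>The Simon expression of \<Q> vanishes pointwise\<close>

lemma sum_quarter_complex_pairing:
  fixes v p f f' :: "'a \<Rightarrow> 'b \<Rightarrow> real"
  shows "(\<Sum>r\<in>A. \<Sum>d\<in>B. (1/4) * (\<i> * complex_of_real (v r d) + complex_of_real (p r d)) *
            (complex_of_real (f r d) + \<i> * complex_of_real (f' r d)))
     = (1/4) * (\<i> * complex_of_real (\<Sum>r\<in>A. \<Sum>d\<in>B. v r d * f r d)
              - complex_of_real (\<Sum>r\<in>A. \<Sum>d\<in>B. v r d * f' r d)
              + complex_of_real (\<Sum>r\<in>A. \<Sum>d\<in>B. p r d * f r d)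
              + \<i> * complex_of_real (\<Sum>r\<in>A. \<Sum>d\<in>B. p r d * f' r d))"
proof -
  have expand: "(1/4) * (\<i> * complex_of_real (v r d) + complex_of_real (p r d)) *
            (complex_of_real (f r d) + \<i> * complex_of_real (f' r d))
      = (1/4) * \<i> * complex_of_real (v r d * f r d) - (1/4) * complex_of_real (v r d * f' r d)
        + (1/4) * complex_of_real (p r d * f r d) + (1/4) * \<i> * complex_of_real (p r d * f' r d)"
    for r d by (simp add: field_simps)
  show ?thesis
    by (simp only: expand sum.distrib sum_subtractf sum_distrib_left[symmetric] of_real_sum)
       (simp add: algebra_simps)
qed

text \<open>Everything below is pointwise algebra at a fixed point x: only the signature of the
  metric, the orientation sign and the antisymmetry of F_ab = \<nabla>_a \<zeta>_b are needed.\<close>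
locale killing_point =
  fixes g :: "real^4 \<Rightarrow> real^4^4" and s :: "real^4 \<Rightarrow> real"
    and \<zeta> :: "real^4 \<Rightarrow> real^4" and x :: "real^4"
  assumes lorentzian: "lorentzian_matrix (g x)"
    and orientation: "s x \<in> {-1, 1}"
    and killing: "\<forall>a b. Fk g \<zeta> x a b + Fk g \<zeta> x b a = 0"
begin

abbreviation vol_factor :: real where
  "vol_factor \<equiv> s x * sqrt \<bar>det (g x)\<bar>"

lemma metric_sym: "g x $ i $ j = g x $ j $ i"
  using lorentzian unfolding lorentzian_matrix_def by (blast intro: symmetric_matrix_entries)

lemma metric_invertible: "invertible (g x)"
  using lorentzian_det_neg[OF lorentzian] by (simp add: invertible_det_nz)

lemma inverse_metric_sym: "ginv g x $ i $ j = ginv g x $ j $ i"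
  using matrix_inv_symmetric[OF _ metric_invertible] lorentzian
  unfolding lorentzian_matrix_def ginv_def by (blast intro: symmetric_matrix_entries)

lemma metric_inverse: "(\<Sum>k\<in>UNIV. g x $ i $ k * ginv g x $ k $ j) = (if i = j then 1 else 0)"
  using arg_cong[OF matrix_inv_inverse(1)[OF metric_invertible], of "\<lambda>M. M $ i $ j"]
  by (simp add: ginv_def matrix_matrix_mult_def mat_def)

lemma vol_factor_lorentzian: "vol_factor * vol_factor * det (ginv g x) = -1"
proof -
  have "det (g x) * det (ginv g x) = 1"
    using matrix_inv_inverse(1)[OF metric_invertible] by (simp add: ginv_def det_mul[symmetric])
  moreover have "s x * s x = 1" using orientation by auto
  moreover have "det (g x) < 0" using lorentzian_det_neg[OF lorentzian] .
  ultimately show ?thesis by (simp add: algebra_simps)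
qed

lemma Fk_anti: "Fk g \<zeta> x a b = - Fk g \<zeta> x b a"
  using killing by (simp add: eq_neg_iff_add_eq_0)

lemma vol_eq: "vol g s x a b c d = vol_factor * levi_civita a b c d"
  by (simp add: vol_def)

lemma Fup_eq: "Fup g \<zeta> x = raise2 (ginv g x) (Fk g \<zeta> x)"
  by (simp add: fun_eq_iff Fup_def raise2_def)

lemma Fstar_eq: "Fstar g s \<zeta> x = hodge vol_factor (ginv g x) (Fk g \<zeta> x)"
  by (simp add: fun_eq_iff Fstar_def hodge_def vol_eq Fup_eq)

lemma Fstar_anti: "Fstar g s \<zeta> x a b = - Fstar g s \<zeta> x b a"
  unfolding Fstar_eq by (rule hodge_anti)

lemma cF_anti: "cF g s \<zeta> x a b = - cF g s \<zeta> x b a"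
  unfolding cF_def using Fk_anti[of a b] Fstar_anti[of a b] by (simp add: algebra_simps)

lemma cFup_eq: "cFup g s \<zeta> x r d = complex_of_real (raise2 (ginv g x) (Fk g \<zeta> x) r d)
     + \<i> * complex_of_real (raise2 (ginv g x) (Fstar g s \<zeta> x) r d)"
  unfolding cFup_def cF_def raise2_def
  by (simp add: distrib_left sum.distrib of_real_sum sum_distrib_left mult_ac)

text \<open>Contracting with the volume form dualises: \<eta>_cmrd F^rd = 2 F*_cm and, since the
  star squares to -1, \<eta>_cmrd F*^rd = -2 F_cm.\<close>
lemma vol_contract_Fk:
  "(\<Sum>r\<in>UNIV. \<Sum>d\<in>UNIV. vol g s x c m r d * raise2 (ginv g x) (Fk g \<zeta> x) r d) = 2 * Fstar g s \<zeta> x c m"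
  by (simp add: Fstar_def Fup_eq)

lemma vol_contract_Fstar:
  "(\<Sum>r\<in>UNIV. \<Sum>d\<in>UNIV. vol g s x c m r d * raise2 (ginv g x) (Fstar g s \<zeta> x) r d) = - 2 * Fk g \<zeta> x c m"
proof -
  have "(\<Sum>r\<in>UNIV. \<Sum>d\<in>UNIV. vol g s x c m r d * raise2 (ginv g x) (Fstar g s \<zeta> x) r d)
      = 2 * hodge vol_factor (ginv g x) (Fstar g s \<zeta> x) c m"
    by (simp add: hodge_def vol_eq sum_distrib_left mult_ac)
  also have "\<dots> = - 2 * Fk g \<zeta> x c m"
    unfolding Fstar_eq
    by (simp add: hodge_hodge[OF inverse_metric_sym vol_factor_lorentzian Fk_anti])
  finally show ?thesis .
qed

lemma cI_fixes_cF: "(\<Sum>r\<in>UNIV. \<Sum>d\<in>UNIV. cI g s x c m r d * cFup g s \<zeta> x r d) = cF g s \<zeta> x c m"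
proof -
  have "(\<Sum>r\<in>UNIV. \<Sum>d\<in>UNIV. cI g s x c m r d * cFup g s \<zeta> x r d)
    = (1/4) * (\<i> * complex_of_real (\<Sum>r\<in>UNIV. \<Sum>d\<in>UNIV. vol g s x c m r d * raise2 (ginv g x) (Fk g \<zeta> x) r d)
              - complex_of_real (\<Sum>r\<in>UNIV. \<Sum>d\<in>UNIV. vol g s x c m r d * raise2 (ginv g x) (Fstar g s \<zeta> x) r d)
              + complex_of_real (\<Sum>r\<in>UNIV. \<Sum>d\<in>UNIV. (g x$c$r * g x$m$d - g x$c$d * g x$m$r) * raise2 (ginv g x) (Fk g \<zeta> x) r d)
              + \<i> * complex_of_real (\<Sum>r\<in>UNIV. \<Sum>d\<in>UNIV. (g x$c$r * g x$m$d - g x$c$d * g x$m$r) * raise2 (ginv g x) (Fstar g s \<zeta> x) r d))"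
    unfolding cI_def cFup_eq by (rule sum_quarter_complex_pairing)
  also have "\<dots> = (1/4) * (\<i> * complex_of_real (2 * Fstar g s \<zeta> x c m) - complex_of_real (- 2 * Fk g \<zeta> x c m)
      + complex_of_real (Fk g \<zeta> x c m - Fk g \<zeta> x m c) + \<i> * complex_of_real (Fstar g s \<zeta> x c m - Fstar g s \<zeta> x m c))"
    by (simp only: vol_contract_Fk vol_contract_Fstar lower_raise2_antisym[OF metric_inverse])
  also have "\<dots> = cF g s \<zeta> x c m"
    using Fk_anti[of m c] Fstar_anti[of m c] by (simp add: cF_def field_simps)
  finally show ?thesis .
qed

lemma cF_contract_zeta: "(\<Sum>m\<in>UNIV. cF g s \<zeta> x c m * complex_of_real (\<zeta> x $ m)) = ernst g s \<zeta> x c / 2"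
  by (simp add: ernst_def)

lemma zeta_contract_cF: "(\<Sum>m\<in>UNIV. complex_of_real (\<zeta> x $ m) * cF g s \<zeta> x m a) = - ernst g s \<zeta> x a / 2"
proof -
  have "(\<Sum>m\<in>UNIV. complex_of_real (\<zeta> x $ m) * cF g s \<zeta> x m a)
      = - (\<Sum>m\<in>UNIV. cF g s \<zeta> x a m * complex_of_real (\<zeta> x $ m))"
    by (simp add: cF_anti[of _ a] sum_negf mult_ac)
  then show ?thesis by (simp add: cF_contract_zeta)
qed

lemma cQ_contract_zeta_cF:
  "(\<Sum>m\<in>UNIV. \<Sum>r\<in>UNIV. \<Sum>d\<in>UNIV. cQ g s \<zeta> x c m r d * complex_of_real (\<zeta> x $ m) * cFup g s \<zeta> x r d)
   = 2 * ernst g s \<zeta> x c * cFF g s \<zeta> x"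
proof -
  let ?P = "cFF g s \<zeta> x"
  have inner: "(\<Sum>r\<in>UNIV. \<Sum>d\<in>UNIV. cQ g s \<zeta> x c m r d * complex_of_real (\<zeta> x $ m) * cFup g s \<zeta> x r d)
      = 4 * ?P * (cF g s \<zeta> x c m * complex_of_real (\<zeta> x $ m))" for m
  proof -
    let ?z = "complex_of_real (\<zeta> x $ m)"
    have expand: "\<And>r d. cQ g s \<zeta> x c m r d * ?z * cFup g s \<zeta> x r d
       = (6 * ?z * cF g s \<zeta> x c m) * (cF g s \<zeta> x r d * cFup g s \<zeta> x r d)
         - (2 * ?P * ?z) * (cI g s x c m r d * cFup g s \<zeta> x r d)"
      by (simp add: cQ_def algebra_simps)
    have "(\<Sum>r\<in>UNIV. \<Sum>d\<in>UNIV. cQ g s \<zeta> x c m r d * ?z * cFup g s \<zeta> x r d)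
       = (6 * ?z * cF g s \<zeta> x c m) * (\<Sum>r\<in>UNIV. \<Sum>d\<in>UNIV. cF g s \<zeta> x r d * cFup g s \<zeta> x r d)
         - (2 * ?P * ?z) * (\<Sum>r\<in>UNIV. \<Sum>d\<in>UNIV. cI g s x c m r d * cFup g s \<zeta> x r d)"
      by (simp only: expand sum_subtractf sum_distrib_left[symmetric])
    also have "\<dots> = (6 * ?z * cF g s \<zeta> x c m) * ?P - (2 * ?P * ?z) * cF g s \<zeta> x c m"
      by (simp only: cI_fixes_cF cFF_def)
    finally show ?thesis by (simp add: algebra_simps)
  qed
  have "(\<Sum>m\<in>UNIV. \<Sum>r\<in>UNIV. \<Sum>d\<in>UNIV. cQ g s \<zeta> x c m r d * complex_of_real (\<zeta> x $ m) * cFup g s \<zeta> x r d)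
     = 4 * ?P * (\<Sum>m\<in>UNIV. cF g s \<zeta> x c m * complex_of_real (\<zeta> x $ m))"
    by (simp only: inner sum_distrib_left)
  then show ?thesis by (simp add: cF_contract_zeta)
qed

lemma zeta_zeta_vol: "(\<Sum>m\<in>UNIV. \<Sum>r\<in>UNIV. \<zeta> x $ m * \<zeta> x $ r * vol g s x m a r c) = 0"
proof (rule sum_symmetric_antisymmetric)
  fix m r
  show "vol g s x m a r c = - vol g s x r a m c"
    using levi_civita_swap(1)[of a m r c] levi_civita_swap(2)[of a m r c] levi_civita_swap(1)[of a r m c]
    by (simp add: vol_eq)
qed

lemma zeta_zeta_metric_pair:
  "(\<Sum>m\<in>UNIV. \<Sum>r\<in>UNIV. \<zeta> x $ m * \<zeta> x $ r * (g x$m$r * g x$a$c - g x$m$c * g x$a$r)) = - gam g \<zeta> x a c"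
proof -
  have norm: "(\<Sum>m\<in>UNIV. \<Sum>r\<in>UNIV. \<zeta> x $ m * \<zeta> x $ r * g x$m$r) = lam g \<zeta> x"
    by (simp add: lam_def zlow_def sum_distrib_left sum_distrib_right mult_ac)
  have lower_c: "(\<Sum>m\<in>UNIV. \<zeta> x $ m * g x$m$c) = zlow g \<zeta> x c"
    by (simp add: zlow_def metric_sym[of _ c] mult_ac)
  have lower_a: "(\<Sum>r\<in>UNIV. \<zeta> x $ r * g x$a$r) = zlow g \<zeta> x a"
    by (simp add: zlow_def mult_ac)
  have "(\<Sum>m\<in>UNIV. \<Sum>r\<in>UNIV. \<zeta> x $ m * \<zeta> x $ r * (g x$m$c * g x$a$r))
      = (\<Sum>m\<in>UNIV. \<zeta> x $ m * g x$m$c) * (\<Sum>r\<in>UNIV. \<zeta> x $ r * g x$a$r)"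
    by (simp only: sum_product) (simp only: mult_ac)
  then have lowered: "(\<Sum>m\<in>UNIV. \<Sum>r\<in>UNIV. \<zeta> x $ m * \<zeta> x $ r * (g x$m$c * g x$a$r))
      = zlow g \<zeta> x c * zlow g \<zeta> x a"
    by (simp only: lower_c lower_a)
  have "(\<Sum>m\<in>UNIV. \<Sum>r\<in>UNIV. \<zeta> x $ m * \<zeta> x $ r * (g x$m$r * g x$a$c - g x$m$c * g x$a$r))
     = g x$a$c * (\<Sum>m\<in>UNIV. \<Sum>r\<in>UNIV. \<zeta> x $ m * \<zeta> x $ r * g x$m$r)
       - (\<Sum>m\<in>UNIV. \<Sum>r\<in>UNIV. \<zeta> x $ m * \<zeta> x $ r * (g x$m$c * g x$a$r))"
    by (simp add: right_diff_distrib sum_subtractf sum_distrib_left mult_ac)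
  then show ?thesis using norm lowered by (simp add: gam_def algebra_simps)
qed

lemma zeta_zeta_contract_cI:
  "(\<Sum>m\<in>UNIV. \<Sum>r\<in>UNIV. complex_of_real (\<zeta> x $ m * \<zeta> x $ r) * cI g s x m a r c)
    = - (1/4) * complex_of_real (gam g \<zeta> x a c)"
proof -
  have expand: "complex_of_real (\<zeta> x $ m * \<zeta> x $ r) * cI g s x m a r c
     = (1/4 * \<i>) * complex_of_real (\<zeta> x $ m * \<zeta> x $ r * vol g s x m a r c)
       + 1/4 * complex_of_real (\<zeta> x $ m * \<zeta> x $ r * (g x$m$r * g x$a$c - g x$m$c * g x$a$r))"
    for m r by (simp add: cI_def algebra_simps)
  have "(\<Sum>m\<in>UNIV. \<Sum>r\<in>UNIV. complex_of_real (\<zeta> x $ m * \<zeta> x $ r) * cI g s x m a r c)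
    = (1/4 * \<i>) * complex_of_real (\<Sum>m\<in>UNIV. \<Sum>r\<in>UNIV. \<zeta> x $ m * \<zeta> x $ r * vol g s x m a r c)
      + 1/4 * complex_of_real (\<Sum>m\<in>UNIV. \<Sum>r\<in>UNIV. \<zeta> x $ m * \<zeta> x $ r * (g x$m$r * g x$a$c - g x$m$c * g x$a$r))"
    by (simp only: expand sum.distrib sum_distrib_left[symmetric] of_real_sum)
  also have "\<dots> = - (1/4) * complex_of_real (gam g \<zeta> x a c)"
    by (simp only: zeta_zeta_vol zeta_zeta_metric_pair) simp
  finally show ?thesis .
qed

lemma zeta_zeta_contract_cQ:
  "(\<Sum>m\<in>UNIV. \<Sum>r\<in>UNIV. complex_of_real (\<zeta> x $ m * \<zeta> x $ r) * cQ g s \<zeta> x m a r c)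
   = 3/2 * ernst g s \<zeta> x a * ernst g s \<zeta> x c + 1/2 * cFF g s \<zeta> x * complex_of_real (gam g \<zeta> x a c)"
proof -
  let ?P = "cFF g s \<zeta> x"
  have expand: "complex_of_real (\<zeta> x $ m * \<zeta> x $ r) * cQ g s \<zeta> x m a r c
     = 6 * ((complex_of_real (\<zeta> x $ m) * cF g s \<zeta> x m a) * (complex_of_real (\<zeta> x $ r) * cF g s \<zeta> x r c))
       - (2 * ?P) * (complex_of_real (\<zeta> x $ m * \<zeta> x $ r) * cI g s x m a r c)" for m r
    by (simp add: cQ_def algebra_simps)
  have "(\<Sum>m\<in>UNIV. \<Sum>r\<in>UNIV. complex_of_real (\<zeta> x $ m * \<zeta> x $ r) * cQ g s \<zeta> x m a r c)
     = 6 * ((\<Sum>m\<in>UNIV. complex_of_real (\<zeta> x $ m) * cF g s \<zeta> x m a) * (\<Sum>r\<in>UNIV. complex_of_real (\<zeta> x $ r) * cF g s \<zeta> x r c))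
       - (2 * ?P) * (\<Sum>m\<in>UNIV. \<Sum>r\<in>UNIV. complex_of_real (\<zeta> x $ m * \<zeta> x $ r) * cI g s x m a r c)"
    by (simp only: expand sum_subtractf sum_distrib_left[symmetric] sum_product)
  also have "\<dots> = 6 * ((- ernst g s \<zeta> x a / 2) * (- ernst g s \<zeta> x c / 2))
      - (2 * ?P) * (- (1/4) * complex_of_real (gam g \<zeta> x a c))"
    by (simp only: zeta_contract_cF zeta_zeta_contract_cI)
  finally show ?thesis by (simp add: field_simps)
qed

lemma simon_expr_cQ: "simon_expr g s \<zeta> x (cQ g s \<zeta> x) a b c = 0"
  unfolding simon_expr_def cQ_contract_zeta_cF zeta_zeta_contract_cQ by (simp add: field_simps)

end

lemma simon_expr_linear:
  "simon_expr g s \<zeta> x (\<lambda>a b c d. T a b c d + T' a b c d / w) a b c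
   = simon_expr g s \<zeta> x T a b c + simon_expr g s \<zeta> x T' a b c / w"
proof -
  have first: "(\<Sum>m\<in>UNIV. \<Sum>r\<in>UNIV. \<Sum>d\<in>UNIV. (T c m r d + T' c m r d / w) * complex_of_real (\<zeta> x $ m) * cFup g s \<zeta> x r d)
     = (\<Sum>m\<in>UNIV. \<Sum>r\<in>UNIV. \<Sum>d\<in>UNIV. T c m r d * complex_of_real (\<zeta> x $ m) * cFup g s \<zeta> x r d)
       + (\<Sum>m\<in>UNIV. \<Sum>r\<in>UNIV. \<Sum>d\<in>UNIV. T' c m r d * complex_of_real (\<zeta> x $ m) * cFup g s \<zeta> x r d) / w" for c
    by (simp add: distrib_right sum.distrib sum_divide_distrib)
  have second: "(\<Sum>m\<in>UNIV. \<Sum>r\<in>UNIV. complex_of_real (\<zeta> x $ m * \<zeta> x $ r) * (T m a r c + T' m a r c / w))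
     = (\<Sum>m\<in>UNIV. \<Sum>r\<in>UNIV. complex_of_real (\<zeta> x $ m * \<zeta> x $ r) * T m a r c)
       + (\<Sum>m\<in>UNIV. \<Sum>r\<in>UNIV. complex_of_real (\<zeta> x $ m * \<zeta> x $ r) * T' m a r c) / w" for a c
    by (simp add: distrib_left sum.distrib sum_divide_distrib)
  show ?thesis
    unfolding simon_expr_def first second by (simp add: algebra_simps add_divide_distrib diff_divide_distrib)
qed

theorem mainTheorem8:
  fixes g :: "real^4 \<Rightarrow> real^4^4" and s :: "real^4 \<Rightarrow> real"
    and \<zeta> :: "real^4 \<Rightarrow> real^4" and \<sigma>' :: "real^4 \<Rightarrow> complex"
    and U V :: "(real^4) set"
  assumes U_open: "open U"
    and metric_lorentzian: "\<forall>x\<in>U. lorentzian_matrix (g x)"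
    and metric_smooth: "\<forall>a b. smooth_on U (\<lambda>x. g x $ a $ b)"
    and orientation: "continuous_on U s" "\<forall>x\<in>U. s x \<in> {-1, 1}"
    and zeta_smooth: "\<forall>a. smooth_on U (\<lambda>x. \<zeta> x $ a)"
    and killing: "\<forall>x\<in>U. \<forall>a b. Fk g \<zeta> x a b + Fk g \<zeta> x b a = 0"
    and V_open: "open V" and V_sub: "V \<subseteq> U"
    and pot_diff: "\<forall>x\<in>V. \<sigma>' differentiable (at x)"
    and potential: "\<forall>x\<in>V. \<forall>a. pd \<sigma>' a x = ernst g s \<zeta> x a"
    and nonzero: "\<forall>x\<in>V. \<sigma>' x \<noteq> 0"
  shows "\<forall>x\<in>V. \<forall>a b c.
           simon g s \<zeta> x a b c = simon_expr g s \<zeta> x (mars_simon g s \<zeta> (\<sigma>' x) x) a b c"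
proof (intro ballI allI)
  fix x a b c
  assume "x \<in> V"
  then have "x \<in> U" using V_sub by auto
  then interpret killing_point g s \<zeta> x
    using metric_lorentzian orientation(2) killing by unfold_locales auto
  have "simon_expr g s \<zeta> x (mars_simon g s \<zeta> (\<sigma>' x) x) a b c
      = simon_expr g s \<zeta> x (cC g s x) a b c + simon_expr g s \<zeta> x (cQ g s \<zeta> x) a b c / \<sigma>' x"
    unfolding mars_simon_def by (rule simon_expr_linear)
  then show "simon g s \<zeta> x a b c = simon_expr g s \<zeta> x (mars_simon g s \<zeta> (\<sigma>' x) x) a b c"
    by (simp add: simon_def simon_expr_cQ)
qed

end
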